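(* Let $G$ be a finite group of order $p^a m$, where $p$ is a prime and $m$ is not divisible by $p$, and let $P$ be a Sylow $p$-subgroup of $G$. If $w$ is any group word such that $w(G)$ is nilpotent, then \[ P\cap w(G)=\langle P\cap G_{w^m}\rangle . \]
   Context: For a group word $w$ and a group $G$, $G_w$ denotes the set of all values of $w$ in $G$ and $w(G)=\langle G_w\rangle$ is the verbal subgroup of $w$. For an integer $m$, $G_{w^m}=\{g^m : g\in G_w\}$. *)

theory Defs
  imports "HOL-Algebra.Algebra"
begin

datatype gword = Var nat | One | Mul gword gword | Inv gword

primrec word_eval :: "('a, 'b) monoid_scheme \<Rightarrow> (nat \<Rightarrow> 'a) \<Rightarrow> gword \<Rightarrow> 'a" where
  "word_eval G f (Var i) = f i"
| "word_eval G f One = \<one>\<^bsub>G\<^esub>"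
| "word_eval G f (Mul u v) = word_eval G f u \<otimes>\<^bsub>G\<^esub> word_eval G f v"
| "word_eval G f (Inv u) = inv\<^bsub>G\<^esub> (word_eval G f u)"

definition word_values :: "('a, 'b) monoid_scheme \<Rightarrow> gword \<Rightarrow> 'a set" where
  "word_values G w = {word_eval G f w | f. \<forall>i. f i \<in> carrier G}"

definition verbal :: "('a, 'b) monoid_scheme \<Rightarrow> gword \<Rightarrow> 'a set" where
  "verbal G w = generate G (word_values G w)"

definition word_power_values :: "('a, 'b) monoid_scheme \<Rightarrow> gword \<Rightarrow> nat \<Rightarrow> 'a set" where
  "word_power_values G w m = {g [^]\<^bsub>G\<^esub> m | g. g \<in> word_values G w}"

definition commutator_set :: "('a, 'b) monoid_scheme \<Rightarrow> 'a set \<Rightarrow> 'a set \<Rightarrow> 'a set" where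
  "commutator_set G A B =
     (\<Union>a\<in>A. \<Union>b\<in>B. {a \<otimes>\<^bsub>G\<^esub> b \<otimes>\<^bsub>G\<^esub> inv\<^bsub>G\<^esub> a \<otimes>\<^bsub>G\<^esub> inv\<^bsub>G\<^esub> b})"

primrec lower_central :: "('a, 'b) monoid_scheme \<Rightarrow> nat \<Rightarrow> 'a set" where
  "lower_central G 0 = carrier G"
| "lower_central G (Suc n) = generate G (commutator_set G (lower_central G n) (carrier G))"

definition nilpotent_group :: "('a, 'b) monoid_scheme \<Rightarrow> bool" where
  "nilpotent_group G \<longleftrightarrow> group G \<and> (\<exists>n. lower_central G n = {\<one>\<^bsub>G\<^esub>})"

end

theory Submission
  imports Defs
begin

(* Proof plan.  Let N = w(G), of order n = p^b * r with p not dividing r, and let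
   Q = {x \<in> N. x^(p^b) = 1} be the set of p-elements of N.

   1. In a nilpotent group, elements of coprime orders commute: their commutator lies in
      every term of the lower central series (section 2).
   2. In a finite group where elements of coprime orders commute, for every factorisation
      of the order into coprime d1 * d2 the solution set sol d1 = {x. x^d1 = 1} is a
      subgroup of order d1 (a counting argument with Sylow subgroups), every element is
      uniquely a commuting product of elements of sol d1 and sol d2, and therefore the power
      map x \<mapsto> x^e with e = 1 mod d1, e = 0 mod d2 is an endomorphism (section 3).
   3. A normal subgroup of p-power exponent lies in every Sylow p-subgroup (section 4), and
      w(G) is normal (section 5).
   4. Applied to N (sections 6 and 7): Q is normal in G of p-power exponent, so Q \<subseteq> P and
      P \<inter> N = Q.  With e = 1 mod p^b and e = 0 mod m, the power map fixes Q, is an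
      endomorphism of N and sends each word value v to (v^m)^(e/m); hence Q lies in the
      subgroup generated by G_{w^m}, which in turn lies in Q. *)

lemma crt_exponent:
  fixes d1 d2 :: nat
  assumes "coprime d1 d2"
  obtains e where "e mod d1 = 1 mod d1" "d2 dvd e"
proof (cases "d2 = 0")
  case True
  then show ?thesis using assms that[of 0] by simp
next
  case False
  obtain x y where "d2 * x = d1 * y + gcd d2 d1" using bezout_nat[OF False] by blast
  then have "d2 * x = d1 * y + 1" using assms(1) by (simp add: coprime_commute)
  then have "(d2 * x) mod d1 = (1 + d1 * y) mod d1" by simp
  also have "\<dots> = 1 mod d1" by (rule mod_mult_self2)
  finally show ?thesis using that[of "d2 * x"] by simp
qed

context group begin

lemma comm_from_commutator:
  assumes "x \<in> carrier G" "y \<in> carrier G" "x \<otimes> y \<otimes> inv x \<otimes> inv y = \<one>"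
  shows "x \<otimes> y = y \<otimes> x"
proof -
  have "x \<otimes> y \<otimes> inv x \<otimes> inv y \<otimes> y \<otimes> x = x \<otimes> y"
    using assms(1,2) by (simp add: m_assoc)
  then show ?thesis using assms by simp
qed

lemma inv_cancel_left': "g \<in> carrier G \<Longrightarrow> z \<in> carrier G \<Longrightarrow> inv g \<otimes> (g \<otimes> z) = z"
  by (simp add: m_assoc[symmetric])

lemma conj_mult: "g \<in> carrier G \<Longrightarrow> x \<in> carrier G \<Longrightarrow> y \<in> carrier G \<Longrightarrow>
  (g \<otimes> x \<otimes> inv g) \<otimes> (g \<otimes> y \<otimes> inv g) = g \<otimes> (x \<otimes> y) \<otimes> inv g"
  by (simp add: m_assoc inv_cancel_left')

lemma conj_inv: "g \<in> carrier G \<Longrightarrow> x \<in> carrier G \<Longrightarrow>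
  inv (g \<otimes> x \<otimes> inv g) = g \<otimes> inv x \<otimes> inv g"
  by (simp add: inv_mult_group m_assoc)

lemma conj_pow:
  assumes g: "g \<in> carrier G" and x: "x \<in> carrier G"
  shows "(g \<otimes> x \<otimes> inv g) [^] (k::nat) = g \<otimes> x [^] k \<otimes> inv g"
proof (induction k)
  case 0 then show ?case using g by simp
next
  case (Suc k)
  have "(g \<otimes> x \<otimes> inv g) [^] Suc k = (g \<otimes> x [^] k \<otimes> inv g) \<otimes> (g \<otimes> x \<otimes> inv g)"
    using Suc by simp
  also have "\<dots> = g \<otimes> (x [^] k \<otimes> x) \<otimes> inv g"
    by (rule conj_mult[OF g]) (use x in simp_all)
  finally show ?case by simp
qed

lemma conj_commutator:
  assumes g: "g \<in> carrier G" and a: "a \<in> carrier G" and b: "b \<in> carrier G"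
  shows "g \<otimes> (a \<otimes> b \<otimes> inv a \<otimes> inv b) \<otimes> inv g =
    (g \<otimes> a \<otimes> inv g) \<otimes> (g \<otimes> b \<otimes> inv g) \<otimes> inv (g \<otimes> a \<otimes> inv g) \<otimes> inv (g \<otimes> b \<otimes> inv g)"
proof -
  have "(g \<otimes> a \<otimes> inv g) \<otimes> (g \<otimes> b \<otimes> inv g) \<otimes> inv (g \<otimes> a \<otimes> inv g) \<otimes> inv (g \<otimes> b \<otimes> inv g)
     = (g \<otimes> a \<otimes> inv g) \<otimes> (g \<otimes> b \<otimes> inv g) \<otimes> (g \<otimes> inv a \<otimes> inv g) \<otimes> (g \<otimes> inv b \<otimes> inv g)"
    using assms by (simp only: conj_inv)
  also have "\<dots> = g \<otimes> (a \<otimes> b) \<otimes> inv g \<otimes> (g \<otimes> inv a \<otimes> inv g) \<otimes> (g \<otimes> inv b \<otimes> inv g)"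
    using assms by (simp only: conj_mult)
  also have "\<dots> = g \<otimes> (a \<otimes> b \<otimes> inv a) \<otimes> inv g \<otimes> (g \<otimes> inv b \<otimes> inv g)"
    using assms conj_mult[of g "a \<otimes> b" "inv a"] by simp
  also have "\<dots> = g \<otimes> (a \<otimes> b \<otimes> inv a \<otimes> inv b) \<otimes> inv g"
    using assms conj_mult[of g "a \<otimes> b \<otimes> inv a" "inv b"] by simp
  finally show ?thesis by simp
qed

lemma pow_cong_mod:
  assumes x: "x \<in> carrier G" and d: "x [^] (d::nat) = \<one>" and kl: "k mod d = l mod d"
  shows "x [^] (k::nat) = x [^] l"
proof -
  have reduce: "x [^] j = x [^] (j mod d)" for j :: nat
  proof -
    have "x [^] j = x [^] (d * (j div d)) \<otimes> x [^] (j mod d)"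
      using nat_pow_mult[OF x, of "d * (j div d)" "j mod d"] by simp
    also have "x [^] (d * (j div d)) = \<one>"
      using x d by (simp add: nat_pow_pow[symmetric])
    finally show ?thesis using x by simp
  qed
  show ?thesis using reduce[of k] reduce[of l] kl by (simp only:)
qed

lemma pow_dvd_one:
  assumes x: "x \<in> carrier G" and d: "x [^] (d::nat) = \<one>" and "d dvd k"
  shows "x [^] k = \<one>"
  using assms by (metis dvdE nat_pow_one nat_pow_pow)

text \<open>If x^s = 1 and x^(d*r) = 1 with s coprime to r,
  then already x^d = 1: the order of x divides d.\<close>
lemma pow_coprime_cancel:
  fixes s d r :: nat
  assumes x: "x \<in> carrier G" and "x [^] s = \<one>" "x [^] (d * r) = \<one>" "coprime s r"
  shows "x [^] d = \<one>"
proof -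
  have "ord x dvd s" "ord x dvd d * r" using assms pow_eq_id[OF x] by auto
  then have "ord x dvd d"
    using assms(4) by (metis coprime_dvd_mult_left_iff coprime_imp_coprime dvd_trans)
  then show ?thesis using pow_eq_id[OF x] by simp
qed

lemma subgroup_pow_card:
  assumes "finite (carrier G)" "subgroup H G" "x \<in> H"
  shows "x [^] card H = \<one>"
proof -
  interpret K: group "subgroup_generated G H" by simp
  have "carrier (subgroup_generated G H) = H"
    using assms(2) subgroup.carrier_subgroup_generated_subgroup by blast
  moreover have "finite H" using assms(1,2) finite_subset subgroup.subset by blast
  ultimately have "x [^]\<^bsub>subgroup_generated G H\<^esub> order (subgroup_generated G H) = \<one>\<^bsub>subgroup_generated G H\<^esub>"
    using K.pow_order_eq_1 assms(3) by simp
  then show ?thesis using \<open>carrier _ = H\<close> by (simp add: order_def pow_subgroup_generated)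
qed

end

section \<open>In a nilpotent group, elements of coprime orders commute\<close>

context group begin

text \<open>If c = [a,b] commutes with a and b, then c^s = 1 whenever a^s = 1 and c^t = 1
  whenever b^t = 1; the two power identities below are the computation behind this.\<close>
lemma commutator_pow_left:
  assumes A: "A \<in> carrier G" and B: "B \<in> carrier G" and C: "C \<in> carrier G"
    and ab: "A \<otimes> B = C \<otimes> B \<otimes> A" and ca: "C \<otimes> A = A \<otimes> C"
  shows "A [^] (i::nat) \<otimes> B = C [^] i \<otimes> B \<otimes> A [^] i"
proof (induction i)
  case 0 then show ?case using B by simp
next
  case (Suc i)
  have ci: "A [^] i \<otimes> C = C \<otimes> A [^] i"
    using group_commutes_pow[OF ca[symmetric] A C] by simp
  have "A [^] Suc i \<otimes> B = A [^] i \<otimes> (A \<otimes> B)" using A B by (simp add: m_assoc)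
  also have "\<dots> = A [^] i \<otimes> C \<otimes> B \<otimes> A" using A B C ab by (simp add: m_assoc)
  also have "\<dots> = C \<otimes> (A [^] i \<otimes> B) \<otimes> A" using A B C ci by (simp add: m_assoc)
  also have "\<dots> = C \<otimes> (C [^] i \<otimes> B \<otimes> A [^] i) \<otimes> A" using Suc by simp
  also have "\<dots> = (C \<otimes> C [^] i) \<otimes> B \<otimes> (A [^] i \<otimes> A)" using A B C by (simp add: m_assoc)
  also have "\<dots> = C [^] Suc i \<otimes> B \<otimes> A [^] Suc i"
    using C by (simp add: nat_pow_Suc2[symmetric])
  finally show ?case .
qed

lemma commutator_pow_right:
  assumes A: "A \<in> carrier G" and B: "B \<in> carrier G" and C: "C \<in> carrier G"
    and ab: "A \<otimes> B = C \<otimes> B \<otimes> A" and cb: "C \<otimes> B = B \<otimes> C"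
  shows "A \<otimes> B [^] (j::nat) = C [^] j \<otimes> B [^] j \<otimes> A"
proof (induction j)
  case 0 then show ?case using A by simp
next
  case (Suc j)
  have cj: "B [^] j \<otimes> C = C \<otimes> B [^] j"
    using group_commutes_pow[OF cb[symmetric] B C] by simp
  have "A \<otimes> B [^] Suc j = (A \<otimes> B [^] j) \<otimes> B" using A B by (simp add: m_assoc)
  also have "\<dots> = C [^] j \<otimes> B [^] j \<otimes> (A \<otimes> B)" using Suc A B C by (simp add: m_assoc)
  also have "\<dots> = C [^] j \<otimes> (B [^] j \<otimes> C) \<otimes> B \<otimes> A" using A B C ab by (simp add: m_assoc)
  also have "\<dots> = C [^] j \<otimes> (C \<otimes> B [^] j) \<otimes> B \<otimes> A" using cj by simp
  also have "\<dots> = (C [^] j \<otimes> C) \<otimes> (B [^] j \<otimes> B) \<otimes> A" using A B C by (simp add: m_assoc)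
  also have "\<dots> = C [^] Suc j \<otimes> B [^] Suc j \<otimes> A" by simp
  finally show ?case .
qed

lemma central_commutator_trivial:
  assumes A: "A \<in> carrier G" and B: "B \<in> carrier G"
    and C: "C = A \<otimes> B \<otimes> inv A \<otimes> inv B"
    and ca: "C \<otimes> A = A \<otimes> C" and cb: "C \<otimes> B = B \<otimes> C"
    and s: "A [^] (s::nat) = \<one>" and t: "B [^] (t::nat) = \<one>" and cop: "coprime s t"
  shows "C = \<one>"
proof -
  have Cc: "C \<in> carrier G" using A B C by simp
  have ab: "A \<otimes> B = C \<otimes> B \<otimes> A"
    using A B C by (simp add: m_assoc)
  have "B = C [^] s \<otimes> B" using commutator_pow_left[OF A B Cc ab ca, of s] s A B Cc by simp
  then have "C [^] s = \<one>" using B Cc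
    by (metis r_cancel_one' nat_pow_closed)
  moreover have "A = C [^] t \<otimes> A" using commutator_pow_right[OF A B Cc ab cb, of t] t A B Cc by simp
  then have "C [^] t = \<one>" using A Cc
    by (metis l_one nat_pow_closed one_closed r_cancel)
  ultimately have "C [^] (1::nat) = \<one>"
    using pow_coprime_cancel[OF Cc, of s 1 t] cop by simp
  then show ?thesis using Cc by simp
qed

lemma lower_central_normal: "lower_central G k \<lhd> G"
proof (induction k)
  case 0
  then show ?case by (simp add: normal_self)
next
  case (Suc k)
  have sub: "lower_central G k \<subseteq> carrier G"
    using Suc normal_imp_subgroup subgroup.subset by blast
  show ?case unfolding lower_central.simps
  proof (rule normal_generateI)
    show "commutator_set G (lower_central G k) (carrier G) \<subseteq> carrier G"
      using sub by (auto simp: commutator_set_def)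
  next
    fix h g assume h: "h \<in> commutator_set G (lower_central G k) (carrier G)" and g: "g \<in> carrier G"
    then obtain a b where ab: "a \<in> lower_central G k" "b \<in> carrier G"
      "h = a \<otimes> b \<otimes> inv a \<otimes> inv b"
      by (auto simp: commutator_set_def)
    have a: "a \<in> carrier G" using ab sub by auto
    have "g \<otimes> a \<otimes> inv g \<in> lower_central G k"
      using normal.inv_op_closed2[OF Suc g ab(1)] .
    moreover have "g \<otimes> b \<otimes> inv g \<in> carrier G" using g ab(2) by simp
    ultimately show "g \<otimes> h \<otimes> inv g \<in> commutator_set G (lower_central G k) (carrier G)"
      unfolding ab(3) conj_commutator[OF g a ab(2)] commutator_set_def
      by (intro UN_I[of "g \<otimes> a \<otimes> inv g"] UN_I[of "g \<otimes> b \<otimes> inv g"]) auto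
  qed
qed

text \<open>The commutator c of a and b lies in every term of the lower central series: if
  c lies in the i-th term, then modulo the (i+1)-st term c is central, so by
  central_commutator_trivial it is trivial there.\<close>
lemma commutator_in_lower_central:
  assumes a: "a \<in> carrier G" and b: "b \<in> carrier G"
    and s: "a [^] (s::nat) = \<one>" and t: "b [^] (t::nat) = \<one>" and cop: "coprime s t"
  shows "a \<otimes> b \<otimes> inv a \<otimes> inv b \<in> lower_central G i"
proof (induction i)
  case 0 then show ?case using a b by simp
next
  case (Suc i)
  define c where "c = a \<otimes> b \<otimes> inv a \<otimes> inv b"
  have c: "c \<in> carrier G" using a b by (simp add: c_def)
  define M where "M = lower_central G (Suc i)"
  interpret M: normal M G unfolding M_def by (rule lower_central_normal)
  let ?Q = "G Mod M"
  let ?f = "\<lambda>x. M #> x"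
  have gQ: "group ?Q" by (rule M.factorgroup_is_group)
  interpret h: group_hom G ?Q ?f
    by (rule group_hom.intro[OF is_group gQ]) (simp add: group_hom_axioms_def M.r_coset_hom_Mod)
  have central: "?f c \<otimes>\<^bsub>?Q\<^esub> ?f x = ?f x \<otimes>\<^bsub>?Q\<^esub> ?f c" if x: "x \<in> carrier G" for x
  proof -
    have "c \<otimes> x \<otimes> inv c \<otimes> inv x \<in> M"
      unfolding M_def lower_central.simps
      by (rule generate.incl) (use Suc x in \<open>auto simp: commutator_set_def c_def\<close>)
    then have "?f (c \<otimes> x \<otimes> inv c \<otimes> inv x) = \<one>\<^bsub>?Q\<^esub>"
      using M.rcos_const[OF is_group] by simp
    then have "?f c \<otimes>\<^bsub>?Q\<^esub> ?f x \<otimes>\<^bsub>?Q\<^esub> inv\<^bsub>?Q\<^esub> ?f c \<otimes>\<^bsub>?Q\<^esub> inv\<^bsub>?Q\<^esub> ?f x = \<one>\<^bsub>?Q\<^esub>"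
      using c x by (simp add: h.hom_mult h.hom_inv)
    then show ?thesis
      by (intro group.comm_from_commutator[OF gQ]) (use c x in auto)
  qed
  have "?f c = \<one>\<^bsub>?Q\<^esub>"
  proof (rule group.central_commutator_trivial[OF gQ])
    show "?f a \<in> carrier ?Q" "?f b \<in> carrier ?Q" using a b by (simp_all add: h.hom_closed)
    show "?f c = ?f a \<otimes>\<^bsub>?Q\<^esub> ?f b \<otimes>\<^bsub>?Q\<^esub> inv\<^bsub>?Q\<^esub> ?f a \<otimes>\<^bsub>?Q\<^esub> inv\<^bsub>?Q\<^esub> ?f b"
      using a b by (simp add: c_def h.hom_mult h.hom_inv)
    show "?f c \<otimes>\<^bsub>?Q\<^esub> ?f a = ?f a \<otimes>\<^bsub>?Q\<^esub> ?f c" using central a .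
    show "?f c \<otimes>\<^bsub>?Q\<^esub> ?f b = ?f b \<otimes>\<^bsub>?Q\<^esub> ?f c" using central b .
    show "?f a [^]\<^bsub>?Q\<^esub> s = \<one>\<^bsub>?Q\<^esub>" using h.hom_nat_pow[OF a, of s] s h.hom_one by metis
    show "?f b [^]\<^bsub>?Q\<^esub> t = \<one>\<^bsub>?Q\<^esub>" using h.hom_nat_pow[OF b, of t] t h.hom_one by metis
    show "coprime s t" by (rule cop)
  qed
  then have "M #> c = M" by simp
  then show ?case using rcos_self[OF c M.subgroup_axioms] by (simp add: M_def c_def)
qed

end

lemma nilpotent_coprime_commute:
  assumes nil: "nilpotent_group G"
    and a: "a \<in> carrier G" and b: "b \<in> carrier G"
    and s: "a [^]\<^bsub>G\<^esub> (s::nat) = \<one>\<^bsub>G\<^esub>" and t: "b [^]\<^bsub>G\<^esub> (t::nat) = \<one>\<^bsub>G\<^esub>"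
    and cop: "coprime s t"
  shows "a \<otimes>\<^bsub>G\<^esub> b = b \<otimes>\<^bsub>G\<^esub> a"
proof -
  interpret group G using nil by (simp add: nilpotent_group_def)
  obtain n where "lower_central G n = {\<one>\<^bsub>G\<^esub>}" using nil by (auto simp: nilpotent_group_def)
  then have "a \<otimes>\<^bsub>G\<^esub> b \<otimes>\<^bsub>G\<^esub> inv\<^bsub>G\<^esub> a \<otimes>\<^bsub>G\<^esub> inv\<^bsub>G\<^esub> b = \<one>\<^bsub>G\<^esub>"
    using commutator_in_lower_central[OF a b s t cop, of n] by simp
  then show ?thesis by (rule comm_from_commutator[OF a b])
qed

section \<open>Finite groups in which elements of coprime orders commute\<close>

text \<open>Splitting off a full prime power q^k from a unitary divisor d of n (one with
  d coprime to n/d); this drives the inductions over unitary divisors below.\<close>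
lemma unitary_divisor_split:
  fixes n d :: nat
  assumes n: "n > 0" and dn: "d dvd n" and cop: "coprime d (n div d)" and d1: "d \<noteq> 1"
  obtains q k d' where "Factorial_Ring.prime q" "d = q ^ k * d'" "coprime (q ^ k) d'" "d' < d"
    "d' dvd n" "coprime d' (n div d')" "n = q ^ k * (n div q ^ k)" "coprime (q ^ k) (n div q ^ k)"
proof -
  have d0: "d \<noteq> 0" using n dn by auto
  obtain q where q: "Factorial_Ring.prime q" "q dvd d" using prime_factor_nat[OF d1] by blast
  define k where "k = multiplicity q d"
  define d' where "d' = d div q ^ k"
  have qk: "q ^ k dvd d" unfolding k_def by (rule multiplicity_dvd)
  have nq: "\<not> q dvd d'" unfolding d'_def k_def
    using multiplicity_decompose[of d q] not_prime_unit[of q] d0 q by blast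
  have k0: "k > 0" unfolding k_def
    using multiplicity_gt_zero_iff[of d q] not_prime_unit[of q] d0 q by blast
  have dd: "d = q ^ k * d'" using qk by (simp add: d'_def)
  have c1: "coprime (q ^ k) d'" using q(1) nq by (simp add: prime_imp_coprime)
  have "q \<le> q ^ k" using self_le_power[of q k] k0 prime_ge_2_nat[OF q(1)] by simp
  then have q2: "q ^ k \<ge> 2" using prime_ge_2_nat[OF q(1)] by simp
  have d'0: "d' > 0" using d0 dd by (cases "d' = 0") auto
  obtain c where c: "n = d * c" using dn by blast
  have "n div d = c" using c d0 by simp
  then have "coprime (q ^ k * d') c" using cop dd by simp
  then have cd': "coprime d' c" and cqc: "coprime (q ^ k) c" by simp_all
  have n1: "n div d' = q ^ k * c" using c dd d'0 by simp
  have n2: "n = q ^ k * (d' * c)" using c dd by (simp add: mult.assoc)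
  have "q ^ k \<noteq> 0" using q2 by linarith
  then have n3: "n div q ^ k = d' * c" by (subst n2) (rule nonzero_mult_div_cancel_left)
  show ?thesis
  proof (rule that[OF q(1) dd c1])
    show "d' < d" using dd q2 d'0 by simp
    show "d' dvd n" "n = q ^ k * (n div q ^ k)" using n2 n3 by simp_all
    show "coprime d' (n div d')" using n1 cd' c1 by (simp add: coprime_commute)
    show "coprime (q ^ k) (n div q ^ k)" using n3 c1 cqc by simp
  qed
qed

text \<open>The hypothesis shared by the groups of this section: finite, and elements of coprime
  orders commute.  By nilpotent_coprime_commute, finite nilpotent groups qualify.\<close>
locale coprime_commuting_group = group +
  assumes fin: "finite (carrier G)"
    and coprime_orders_commute: "\<And>a b s t. a \<in> carrier G \<Longrightarrow> b \<in> carrier G \<Longrightarrow> coprime (s::nat) t \<Longrightarrow>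
       a [^] s = \<one> \<Longrightarrow> b [^] t = \<one> \<Longrightarrow> a \<otimes> b = b \<otimes> a"
begin

definition sol :: "nat \<Rightarrow> 'a set" where "sol d = {x \<in> carrier G. x [^] d = \<one>}"

lemma sol_carrier: "sol d \<subseteq> carrier G" by (auto simp: sol_def)

lemma finite_sol: "finite (sol d)" using fin sol_carrier finite_subset by blast

lemma sol_1: "sol 1 = {\<one>}" by (auto simp: sol_def)

lemma sol_order: "sol (order G) = carrier G"
  using pow_order_eq_1 by (auto simp: sol_def)

lemma order_pos: "order G > 0"
  using fin one_closed by (auto simp: order_def card_gt_0_iff)

lemma sol_projection:
  assumes cop: "coprime d1 d2" and e: "e mod d1 = 1 mod d1" "d2 dvd e"
    and a: "a \<in> sol d1" and b: "b \<in> sol d2"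
  shows "(a \<otimes> b) [^] e = a" "a \<otimes> b = b \<otimes> a"
proof -
  have ac: "a \<in> carrier G" and bc: "b \<in> carrier G" and a1: "a [^] d1 = \<one>" and b1: "b [^] d2 = \<one>"
    using a b by (auto simp: sol_def)
  show ab: "a \<otimes> b = b \<otimes> a" using coprime_orders_commute[OF ac bc cop a1 b1] .
  have "(a \<otimes> b) [^] e = a [^] e \<otimes> b [^] e" using pow_mult_distrib[OF ab ac bc] .
  also have "a [^] e = a [^] (1::nat)" using pow_cong_mod[OF ac a1 e(1)] .
  also have "b [^] e = \<one>" using pow_dvd_one[OF bc b1 e(2)] .
  finally show "(a \<otimes> b) [^] e = a" using ac by simp
qed

text \<open>Every solution of x^(d1*d2) = 1 is uniquely a product of a solution of x^d1 = 1 and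
  one of x^d2 = 1; the factors are recovered as powers x^e, x^(1-e) of x.\<close>
lemma sol_split:
  assumes cop: "coprime d1 d2" and pos: "d1 \<noteq> 0" "d2 \<noteq> 0"
  shows "bij_betw (\<lambda>(a, b). a \<otimes> b) (sol d1 \<times> sol d2) (sol (d1 * d2))"
proof -
  obtain e where e: "e mod d1 = 1 mod d1" "d2 dvd e" using crt_exponent[OF cop] by blast
  show ?thesis unfolding bij_betw_def
  proof (intro conjI)
    show "inj_on (\<lambda>(a, b). a \<otimes> b) (sol d1 \<times> sol d2)"
    proof (rule inj_onI, clarify)
      fix a b a' b' assume a: "a \<in> sol d1" and b: "b \<in> sol d2" and a': "a' \<in> sol d1"
        and b': "b' \<in> sol d2" and eq: "a \<otimes> b = a' \<otimes> b'"
      have "a = a'" using sol_projection(1)[OF cop e a b] sol_projection(1)[OF cop e a' b'] eq by simp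
      moreover have "a \<in> carrier G" "b \<in> carrier G" "b' \<in> carrier G" using a b b' sol_carrier by auto
      ultimately show "a = a' \<and> b = b'" using eq l_cancel[of a b b'] by simp
    qed
  next
    show "(\<lambda>(a, b). a \<otimes> b) ` (sol d1 \<times> sol d2) = sol (d1 * d2)"
    proof (intro equalityI subsetI)
      fix z assume "z \<in> (\<lambda>(a, b). a \<otimes> b) ` (sol d1 \<times> sol d2)"
      then obtain a b where a: "a \<in> sol d1" and b: "b \<in> sol d2" and z: "z = a \<otimes> b" by auto
      have ac: "a \<in> carrier G" and bc: "b \<in> carrier G" and a1: "a [^] d1 = \<one>" and b1: "b [^] d2 = \<one>"
        using a b by (auto simp: sol_def)
      have "(a \<otimes> b) [^] (d1 * d2) = a [^] (d1 * d2) \<otimes> b [^] (d1 * d2)"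
        using pow_mult_distrib[OF sol_projection(2)[OF cop e a b] ac bc] .
      also have "\<dots> = \<one>" using pow_dvd_one[OF ac a1] pow_dvd_one[OF bc b1] by simp
      finally show "z \<in> sol (d1 * d2)" using z ac bc by (simp add: sol_def)
    next
      fix x assume x: "x \<in> sol (d1 * d2)"
      have xc: "x \<in> carrier G" and x1: "x [^] (d1 * d2) = \<one>" using x by (auto simp: sol_def)
      define a where "a = x [^] e"
      define b where "b = inv a \<otimes> x"
      have ac: "a \<in> carrier G" using xc by (simp add: a_def)
      have "a [^] d1 = x [^] (e * d1)" using xc by (simp add: a_def nat_pow_pow)
      also have "\<dots> = \<one>" using pow_dvd_one[OF xc x1] e(2) by simp
      finally have a1: "a [^] d1 = \<one>" .
      have comm: "a \<otimes> x = x \<otimes> a" unfolding a_def using xc by (simp add: nat_pow_Suc2[symmetric])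
      have "inv a \<otimes> x = inv a \<otimes> (x \<otimes> a) \<otimes> inv a" using ac xc by (simp add: m_assoc)
      also have "\<dots> = inv a \<otimes> (a \<otimes> x) \<otimes> inv a" using comm by simp
      also have "\<dots> = x \<otimes> inv a" using ac xc by (simp add: m_assoc[symmetric])
      finally have "inv a \<otimes> x = x \<otimes> inv a" .
      then have "b [^] d2 = inv a [^] d2 \<otimes> x [^] d2"
        unfolding b_def by (rule pow_mult_distrib[OF _ inv_closed[OF ac] xc])
      also have "inv a [^] d2 = inv (x [^] (e * d2))"
        using xc by (simp add: a_def nat_pow_inv nat_pow_pow)
      also have "x [^] (e * d2) = x [^] d2"
      proof -
        have "e * d2 mod (d1 * d2) = (e mod d1) * d2" by (rule mod_mult_mult2)
        also have "\<dots> = d2 mod (d1 * d2)" using e(1) by (simp add: mod_mult_mult2)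
        finally show ?thesis by (rule pow_cong_mod[OF xc x1])
      qed
      finally have b1: "b [^] d2 = \<one>" using xc by simp
      have "x = a \<otimes> b" using ac xc by (simp add: b_def m_assoc[symmetric])
      moreover have "a \<in> sol d1" "b \<in> sol d2" using ac a1 b1 xc by (auto simp: sol_def b_def)
      ultimately show "x \<in> (\<lambda>(a, b). a \<otimes> b) ` (sol d1 \<times> sol d2)" by auto
    qed
  qed
qed

lemma card_sol_mult:
  assumes "coprime d1 d2" "d1 \<noteq> 0" "d2 \<noteq> 0"
  shows "card (sol (d1 * d2)) = card (sol d1) * card (sol d2)"
  using bij_betw_same_card[OF sol_split[OF assms]] by (simp add: card_cartesian_product)

lemma sol_mult_image:
  assumes "coprime d1 d2" "d1 \<noteq> 0" "d2 \<noteq> 0"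
  shows "sol (d1 * d2) = (\<lambda>(a, b). a \<otimes> b) ` (sol d1 \<times> sol d2)"
  using bij_betw_imp_surj_on[OF sol_split[OF assms]] by simp

lemma sylow_in_sol:
  assumes "Factorial_Ring.prime q" "order G = q ^ k * m'"
  obtains H where "subgroup H G" "card H = q ^ k" "H \<subseteq> sol (q ^ k)"
proof -
  have "sylow G q k m'" unfolding sylow_eq sylow_axioms_def using assms fin is_group by simp
  then obtain H where H: "subgroup H G" "card H = q ^ k" using sylow.sylow_thm by blast
  have "H \<subseteq> sol (q ^ k)"
    using subgroup_pow_card[OF fin H(1)] H subgroup.subset[OF H(1)] by (auto simp: sol_def)
  then show ?thesis using that H by blast
qed

text \<open>For a unitary divisor d of the group order, x^d = 1 has at least d solutions: a product
  of Sylow subgroups supplies them.\<close>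
lemma card_sol_ge:
  "d dvd order G \<Longrightarrow> coprime d (order G div d) \<Longrightarrow> d \<le> card (sol d)"
proof (induction d rule: less_induct)
  case (less d)
  show ?case
  proof (cases "d = 1")
    case True show ?thesis unfolding True sol_1 by simp
  next
    case False
    obtain q k d' where s: "Factorial_Ring.prime q" "d = q ^ k * d'" "coprime (q ^ k) d'" "d' < d"
      "d' dvd order G" "coprime d' (order G div d')" "order G = q ^ k * (order G div q ^ k)"
      using unitary_divisor_split[OF order_pos less.prems False] by blast
    obtain H where H: "subgroup H G" "card H = q ^ k" "H \<subseteq> sol (q ^ k)"
      using sylow_in_sol[OF s(1) s(7)] by blast
    have "q ^ k \<le> card (sol (q ^ k))" using card_mono[OF finite_sol H(3)] H(2) by simp
    moreover have "d' \<le> card (sol d')" using less.IH[OF s(4,5,6)] .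
    moreover have "d' \<noteq> 0" "q ^ k \<noteq> 0" using s(1,2) less.prems(1) order_pos by auto
    ultimately show ?thesis using card_sol_mult[OF s(3)] s(2) by (simp add: mult_le_mono)
  qed
qed

text \<open>Since the solution sets for d and order G / d multiply bijectively onto the whole
  group, both lower bounds are equalities.\<close>
lemma card_sol:
  assumes "d dvd order G" "coprime d (order G div d)"
  shows "card (sol d) = d"
proof -
  define d2 where "d2 = order G div d"
  have n: "order G = d * d2" using assms(1) by (simp add: d2_def)
  have pos: "d \<noteq> 0" "d2 \<noteq> 0" using n order_pos by auto
  have cdd: "coprime d d2" using assms(2) d2_def by simp
  have "coprime d2 d" using cdd by (rule coprime_commute[THEN iffD1])
  then have "coprime d2 (order G div d2)" using n pos by simp
  then have g2: "d2 \<le> card (sol d2)" using card_sol_ge n by simp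
  have g1: "d \<le> card (sol d)" using card_sol_ge assms by blast
  have prod: "card (sol d) * card (sol d2) = d * d2"
    using card_sol_mult[OF cdd pos] n sol_order by (simp add: order_def)
  show ?thesis
  proof (rule ccontr)
    assume "card (sol d) \<noteq> d"
    then have "d * d2 < card (sol d) * d2" using g1 pos by simp
    also have "\<dots> \<le> card (sol d) * card (sol d2)" using g2 by simp
    finally show False using prod by simp
  qed
qed

text \<open>For a unitary divisor d, the solutions of x^d = 1 form a subgroup: for a prime power it
  is the Sylow subgroup (equal cardinalities), and in general a product of elementwise
  commuting subgroups.\<close>
lemma sol_subgroup:
  "d dvd order G \<Longrightarrow> coprime d (order G div d) \<Longrightarrow> subgroup (sol d) G"
proof (induction d rule: less_induct)
  case (less d)
  show ?case
  proof (cases "d = 1")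
    case True show ?thesis unfolding True sol_1 by (rule triv_subgroup)
  next
    case False
    obtain q k d' where s: "Factorial_Ring.prime q" "d = q ^ k * d'" "coprime (q ^ k) d'" "d' < d"
      "d' dvd order G" "coprime d' (order G div d')" "order G = q ^ k * (order G div q ^ k)"
      "coprime (q ^ k) (order G div q ^ k)"
      using unitary_divisor_split[OF order_pos less.prems False] by blast
    have ih: "subgroup (sol d') G" using less.IH[OF s(4,5,6)] .
    obtain H where H: "subgroup H G" "card H = q ^ k" "H \<subseteq> sol (q ^ k)"
      using sylow_in_sol[OF s(1) s(7)] by blast
    have "card (sol (q ^ k)) = q ^ k" using card_sol s(7,8) by (metis dvd_triv_left)
    then have "H = sol (q ^ k)" using card_subset_eq[OF finite_sol H(3)] H(2) by simp
    then have sq: "subgroup (sol (q ^ k)) G" using H(1) by simp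
    have "d' \<noteq> 0" "q ^ k \<noteq> 0" using s(1,2) less.prems(1) order_pos by auto
    note img = sol_mult_image[OF s(3) this(2,1)]
    show ?thesis
    proof (rule subgroupI)
      show "sol d \<subseteq> carrier G" by (rule sol_carrier)
      show "sol d \<noteq> {}" by (auto simp: sol_def)
      show "inv h \<in> sol d" if "h \<in> sol d" for h
        using that by (auto simp: sol_def nat_pow_inv)
      show "h1 \<otimes> h2 \<in> sol d" if h1: "h1 \<in> sol d" and h2: "h2 \<in> sol d" for h1 h2
      proof -
        obtain a b where a: "a \<in> sol (q ^ k)" and b: "b \<in> sol d'" and h1e: "h1 = a \<otimes> b"
          using h1 img s(2) by auto
        obtain a' b' where a': "a' \<in> sol (q ^ k)" and b': "b' \<in> sol d'" and h2e: "h2 = a' \<otimes> b'"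
          using h2 img s(2) by auto
        have c: "a \<in> carrier G" "b \<in> carrier G" "a' \<in> carrier G" "b' \<in> carrier G"
          using a b a' b' sol_carrier by auto
        have "a' \<otimes> b = b \<otimes> a'"
          using coprime_orders_commute[OF c(3) c(2) s(3)] a' b by (auto simp: sol_def)
        then have "h1 \<otimes> h2 = (a \<otimes> a') \<otimes> (b \<otimes> b')"
          using c h1e h2e by (simp add: m_assoc[symmetric]) (simp add: m_assoc)
        moreover have "a \<otimes> a' \<in> sol (q ^ k)" using sq a a' by (simp add: subgroup.m_closed)
        moreover have "b \<otimes> b' \<in> sol d'" using ih b b' by (simp add: subgroup.m_closed)
        ultimately show ?thesis using img s(2) by auto
      qed
    qed
  qed
qed

lemma pow_mult_coprime_factorisation:
  assumes cop: "coprime d1 d2" and ord: "order G = d1 * d2"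
    and e: "e mod d1 = 1 mod d1" "d2 dvd e"
    and x: "x \<in> carrier G" and y: "y \<in> carrier G"
  shows "(x \<otimes> y) [^] e = x [^] e \<otimes> y [^] e"
proof -
  have pos: "d1 \<noteq> 0" "d2 \<noteq> 0" using ord order_pos by auto
  have "coprime d2 d1" using cop by (rule coprime_commute[THEN iffD1])
  then have sub1: "subgroup (sol d1) G" and sub2: "subgroup (sol d2) G"
    using sol_subgroup[of d1] sol_subgroup[of d2] ord pos cop by simp_all
  have decomp: "carrier G = (\<lambda>(a, b). a \<otimes> b) ` (sol d1 \<times> sol d2)"
    using sol_mult_image[OF cop pos] ord sol_order by simp
  obtain a b where a: "a \<in> sol d1" "b \<in> sol d2" "x = a \<otimes> b" using x decomp by auto
  obtain a' b' where a': "a' \<in> sol d1" "b' \<in> sol d2" "y = a' \<otimes> b'" using y decomp by auto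
  have c: "a \<in> carrier G" "b \<in> carrier G" "a' \<in> carrier G" "b' \<in> carrier G"
    using a a' sol_carrier by auto
  have "b \<otimes> a' = a' \<otimes> b" using sol_projection(2)[OF cop e a'(1) a(2)] by simp
  then have "x \<otimes> y = (a \<otimes> a') \<otimes> (b \<otimes> b')"
    using c a a' by (simp add: m_assoc[symmetric]) (simp add: m_assoc)
  moreover have "a \<otimes> a' \<in> sol d1" "b \<otimes> b' \<in> sol d2"
    using a a' subgroup.m_closed[OF sub1] subgroup.m_closed[OF sub2] by auto
  ultimately have "(x \<otimes> y) [^] e = a \<otimes> a'" using sol_projection(1)[OF cop e] by simp
  moreover have "x [^] e = a" "y [^] e = a'" using sol_projection(1)[OF cop e] a a' by simp_all
  ultimately show ?thesis by simp
qed

end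

section \<open>Normal p-subgroups lie in every Sylow p-subgroup\<close>

context group begin

text \<open>A finite group of p-power exponent has p-power order: a Sylow q-subgroup for another
  prime q would consist of elements whose orders divide both q^k and p^c.\<close>
lemma p_exponent_imp_p_order:
  assumes fin: "finite (carrier G)" and p: "Factorial_Ring.prime p"
    and exp: "\<And>x. x \<in> carrier G \<Longrightarrow> x [^] (p ^ c) = \<one>"
  shows "\<exists>j. order G = p ^ j"
proof -
  have n0: "order G \<noteq> 0" using fin one_closed by (auto simp: order_def)
  obtain y where y: "order G = p ^ multiplicity p (order G) * y" "\<not> p dvd y"
    using multiplicity_decompose'[of "order G" p] n0 not_prime_unit[of p] p by blast
  have "y = 1"
  proof (rule ccontr)
    assume "y \<noteq> 1"
    then obtain q where q: "Factorial_Ring.prime q" "q dvd y" using prime_factor_nat by blast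
    have "q dvd order G" using q(2) y(1) by (metis dvd_mult2 mult.commute)
    then have k0: "multiplicity q (order G) > 0"
      using multiplicity_gt_zero_iff[of "order G" q] not_prime_unit[of q] n0 q by blast
    define k where "k = multiplicity q (order G)"
    have "order G = q ^ k * (order G div q ^ k)" by (simp add: k_def multiplicity_dvd)
    then have "sylow G q k (order G div q ^ k)"
      unfolding sylow_eq sylow_axioms_def using q(1) fin is_group by blast
    then obtain H where H: "subgroup H G" "card H = q ^ k" using sylow.sylow_thm by blast
    have cop: "coprime (q ^ k) (p ^ c)" using primes_coprime[OF q(1) p] q(2) y(2) by auto
    have "H \<subseteq> {\<one>}"
    proof
      fix x assume x: "x \<in> H"
      have xc: "x \<in> carrier G" using subgroup.mem_carrier[OF H(1) x] .
      have "x [^] (q ^ k) = \<one>" using subgroup_pow_card[OF fin H(1) x] H(2) by simp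
      then have "x [^] (1::nat) = \<one>"
        using pow_coprime_cancel[OF xc _ _ cop, of 1] exp[OF xc] by simp
      then show "x \<in> {\<one>}" using xc by simp
    qed
    then have "card H \<le> 1" using card_mono[of "{\<one>}" H] by simp
    moreover have "q \<le> q ^ k" using self_le_power[of q k] k0 prime_ge_2_nat[OF q(1)] by (simp add: k_def)
    ultimately show False using H(2) prime_ge_2_nat[OF q(1)] by simp
  qed
  then show ?thesis using y(1) by auto
qed

lemma subgroup_p_exponent_imp_p_order:
  assumes fin: "finite (carrier G)" and p: "Factorial_Ring.prime p" and H: "subgroup H G"
    and exp: "\<And>x. x \<in> H \<Longrightarrow> x [^] (p ^ c) = \<one>"
  shows "\<exists>j. card H = p ^ j"
proof -
  interpret K: group "subgroup_generated G H" by simp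
  have cK: "carrier (subgroup_generated G H) = H"
    using H subgroup.carrier_subgroup_generated_subgroup by blast
  have "\<exists>j. order (subgroup_generated G H) = p ^ j"
  proof (rule K.p_exponent_imp_p_order[OF _ p])
    show "finite (carrier (subgroup_generated G H))"
      using cK fin subgroup.subset[OF H] finite_subset by metis
    show "x [^]\<^bsub>subgroup_generated G H\<^esub> (p ^ c) = \<one>\<^bsub>subgroup_generated G H\<^esub>"
      if "x \<in> carrier (subgroup_generated G H)" for x
      using exp that cK by (simp add: pow_subgroup_generated)
  qed
  then show ?thesis using cK by (simp add: order_def)
qed

lemma normal_coset_pow:
  assumes Q: "Q \<lhd> G" and q: "q \<in> Q" and y: "y \<in> carrier G"
  shows "\<exists>q'\<in>Q. (q \<otimes> y) [^] (k::nat) = q' \<otimes> y [^] k"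
proof (induction k)
  case 0
  have "\<one> \<in> Q" using subgroup.one_closed[OF normal_imp_subgroup[OF Q]] .
  then show ?case by (intro bexI[of _ "\<one>"]) simp_all
next
  case (Suc k)
  then obtain q' where q': "q' \<in> Q" "(q \<otimes> y) [^] k = q' \<otimes> y [^] k" by blast
  have sQ: "subgroup Q G" using Q normal_imp_subgroup by blast
  have qc: "q \<in> carrier G" "q' \<in> carrier G"
    using subgroup.mem_carrier[OF sQ q] subgroup.mem_carrier[OF sQ q'(1)] by auto
  have yk: "y [^] k \<in> carrier G" using y by simp
  have c: "y [^] k \<otimes> q \<otimes> inv (y [^] k) \<in> Q" using normal.inv_op_closed2[OF Q yk q] .
  have "(q \<otimes> y) [^] Suc k = q' \<otimes> y [^] k \<otimes> (q \<otimes> y)" using q' by simp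
  also have "\<dots> = q' \<otimes> (y [^] k \<otimes> q \<otimes> inv (y [^] k)) \<otimes> (y [^] k \<otimes> y)"
    using qc yk y by (simp add: m_assoc inv_cancel_left')
  also have "y [^] k \<otimes> y = y [^] Suc k" by simp
  finally show ?case using subgroup.m_closed[OF sQ q'(1) c] by blast
qed

text \<open>A normal subgroup Q of p-power exponent lies in every Sylow p-subgroup P: the product
  QP is a subgroup of p-power exponent, hence a p-group containing P, hence equal to P.\<close>
lemma normal_p_subgroup_in_sylow:
  assumes fin: "finite (carrier G)" and p: "Factorial_Ring.prime p"
    and ord: "order G = p ^ a * m" and pm: "\<not> p dvd m"
    and P: "subgroup P G" and cP: "card P = p ^ a"
    and Q: "Q \<lhd> G" and expQ: "\<And>q. q \<in> Q \<Longrightarrow> q [^] (p ^ b) = \<one>"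
  shows "Q \<subseteq> P"
proof -
  interpret QP: second_isomorphism_grp Q G P
    using Q P by (simp add: second_isomorphism_grp_def second_isomorphism_grp_axioms_def)
  define S where "S = Q <#> P"
  have sS: "subgroup S G" unfolding S_def by (rule QP.normal_set_mult_subgroup)
  have expS: "x [^] (p ^ (a + b)) = \<one>" if x: "x \<in> S" for x
  proof -
    obtain q y where q: "q \<in> Q" and y: "y \<in> P" and xqy: "x = q \<otimes> y"
      using x by (auto simp: S_def set_mult_def)
    have yc: "y \<in> carrier G" using subgroup.mem_carrier[OF P y] .
    obtain q' where q': "q' \<in> Q" "(q \<otimes> y) [^] (p ^ a) = q' \<otimes> y [^] (p ^ a)"
      using normal_coset_pow[OF Q q yc] by blast
    have "y [^] (p ^ a) = \<one>" using subgroup_pow_card[OF fin P y] cP by simp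
    then have "x [^] (p ^ a) = q'" using q' xqy QP.mem_carrier by simp
    moreover have "x [^] (p ^ a * p ^ b) = (x [^] (p ^ a)) [^] (p ^ b)"
      using subgroup.mem_carrier[OF sS x] by (simp add: nat_pow_pow)
    ultimately have "x [^] (p ^ a * p ^ b) = q' [^] (p ^ b)" by simp
    then show ?thesis using expQ[OF q'(1)] by (simp add: power_add)
  qed
  obtain j where j: "card S = p ^ j"
    using subgroup_p_exponent_imp_p_order[OF fin p sS expS] by blast
  have "card S dvd order G" using lagrange[OF sS] by (metis dvd_triv_right)
  then have "p ^ j dvd p ^ a * m" using j ord by simp
  moreover have "coprime (p ^ j) m" using p pm by (simp add: prime_imp_coprime)
  ultimately have "p ^ j dvd p ^ a" using coprime_dvd_mult_left_iff by blast
  then have "card S \<le> card P" using j cP p by (simp add: dvd_imp_le prime_gt_0_nat)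
  moreover have finS: "finite S" using fin sS subgroup.subset finite_subset by blast
  moreover have "P \<subseteq> S" unfolding S_def by (rule QP.S_contained_in_set_mult)
  ultimately have "P = S" using card_seteq by blast
  then show ?thesis unfolding S_def using QP.H_contained_in_set_mult by simp
qed

end

section \<open>Verbal subgroups\<close>

context group begin

lemma word_eval_closed:
  "(\<And>i. f i \<in> carrier G) \<Longrightarrow> word_eval G f u \<in> carrier G"
  by (induction u) auto

lemma word_eval_conj:
  assumes g: "g \<in> carrier G" and f: "\<And>i. f i \<in> carrier G"
  shows "g \<otimes> word_eval G f u \<otimes> inv g = word_eval G (\<lambda>i. g \<otimes> f i \<otimes> inv g) u"
proof (induction u)
  case (Var i) then show ?case by simp
next
  case One then show ?case using g by (simp add: inv_cancel_left' m_assoc)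
next
  case (Mul u v)
  have "g \<otimes> word_eval G f (Mul u v) \<otimes> inv g
     = (g \<otimes> word_eval G f u \<otimes> inv g) \<otimes> (g \<otimes> word_eval G f v \<otimes> inv g)"
    using conj_mult[OF g word_eval_closed[OF f] word_eval_closed[OF f]] by simp
  then show ?case using Mul by simp
next
  case (Inv u)
  have "g \<otimes> word_eval G f (Inv u) \<otimes> inv g = inv (g \<otimes> word_eval G f u \<otimes> inv g)"
    using conj_inv[OF g word_eval_closed[OF f]] by simp
  then show ?case using Inv by simp
qed

lemma word_values_carrier: "word_values G w \<subseteq> carrier G"
  using word_eval_closed by (auto simp: word_values_def)

lemma verbal_normal: "verbal G w \<lhd> G"
  unfolding verbal_def
proof (rule normal_generateI[OF word_values_carrier])
  fix h g assume h: "h \<in> word_values G w" and g: "g \<in> carrier G"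
  then obtain f where f: "\<And>i. f i \<in> carrier G" and hf: "h = word_eval G f w"
    by (auto simp: word_values_def)
  have "g \<otimes> h \<otimes> inv g = word_eval G (\<lambda>i. g \<otimes> f i \<otimes> inv g) w"
    using word_eval_conj[OF g f] hf by simp
  moreover have "\<forall>i. g \<otimes> f i \<otimes> inv g \<in> carrier G" using g f by simp
  ultimately show "g \<otimes> h \<otimes> inv g \<in> word_values G w" by (auto simp: word_values_def)
qed

end

section \<open>The power projection onto the p-part of a nilpotent normal subgroup\<close>

lemma nilpotent_imp_coprime_commuting_group:
  assumes "nilpotent_group H" "finite (carrier H)"
  shows "coprime_commuting_group H"
proof (rule coprime_commuting_group.intro)
  show "group H" using assms(1) by (simp add: nilpotent_group_def)
  show "coprime_commuting_group_axioms H"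
    using assms(2) nilpotent_coprime_commute[OF assms(1)]
    by (intro coprime_commuting_group_axioms.intro) auto
qed

context group begin

lemma nilpotent_normal_coprime_split:
  assumes fin: "finite (carrier G)" and N: "N \<lhd> G"
    and nil: "nilpotent_group (subgroup_generated G N)"
    and cop: "coprime d1 d2" and card: "card N = d1 * d2"
  shows "{x \<in> N. x [^] d1 = \<one>} \<lhd> G"
    and "e mod d1 = 1 mod d1 \<Longrightarrow> d2 dvd e \<Longrightarrow> x \<in> N \<Longrightarrow> y \<in> N \<Longrightarrow>
         (x \<otimes> y) [^] e = x [^] e \<otimes> y [^] e"
proof -
  define K where "K = subgroup_generated G N"
  have sN: "subgroup N G" using N by (rule normal_imp_subgroup)
  have cK: "carrier K = N"
    unfolding K_def by (rule subgroup.carrier_subgroup_generated_subgroup[OF sN])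
  have Kops: "monoid.mult K = monoid.mult G" "one K = one G" "(pow K :: _ \<Rightarrow> nat \<Rightarrow> _) = pow G"
    unfolding K_def by (simp_all add: pow_subgroup_generated)
  have finN: "finite N" using fin subgroup.subset[OF sN] finite_subset by blast
  interpret K: coprime_commuting_group K
    using nilpotent_imp_coprime_commuting_group[OF nil] finN cK by (simp add: K_def)
  have oK: "order K = d1 * d2" using card cK by (simp add: order_def)
  have "d1 \<noteq> 0" using oK K.order_pos by auto
  moreover have "coprime d1 (order K div d1)" using oK cop \<open>d1 \<noteq> 0\<close> by simp
  ultimately have "subgroup (K.sol d1) K" using K.sol_subgroup oK by simp
  moreover have solK: "K.sol d1 = {x \<in> N. x [^] d1 = \<one>}"
    by (simp add: K.sol_def cK Kops)
  ultimately have sQ: "subgroup {x \<in> N. x [^] d1 = \<one>} G"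
    unfolding K_def subgroup_subgroup_generated_iff by simp
  show "{x \<in> N. x [^] d1 = \<one>} \<lhd> G"
    unfolding normal_inv_iff
  proof (intro conjI ballI sQ)
    fix g h assume g: "g \<in> carrier G" and h: "h \<in> {x \<in> N. x [^] d1 = \<one>}"
    have hc: "h \<in> carrier G" using h subgroup.subset[OF sN] by blast
    have "g \<otimes> h \<otimes> inv g \<in> N" using normal.inv_op_closed2[OF N g] h by simp
    moreover have "(g \<otimes> h \<otimes> inv g) [^] d1 = \<one>" using conj_pow[OF g hc, of d1] h g by simp
    ultimately show "g \<otimes> h \<otimes> inv g \<in> {x \<in> N. x [^] d1 = \<one>}" by simp
  qed
  show "(x \<otimes> y) [^] e = x [^] e \<otimes> y [^] e"
    if "e mod d1 = 1 mod d1" "d2 dvd e" "x \<in> N" "y \<in> N"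
    using K.pow_mult_coprime_factorisation[OF cop oK that(1,2)] that(3,4) by (simp add: cK Kops)
qed

lemma generate_pow_into:
  assumes V: "V \<subseteq> carrier G" and H: "subgroup H G"
    and gens: "\<And>v. v \<in> V \<Longrightarrow> v [^] (e::nat) \<in> H"
    and mult: "\<And>x y. x \<in> generate G V \<Longrightarrow> y \<in> generate G V \<Longrightarrow>
                 (x \<otimes> y) [^] e = x [^] e \<otimes> y [^] e"
    and z: "z \<in> generate G V"
  shows "z [^] e \<in> H"
  using z
proof (induction rule: generate.induct)
  case one then show ?case using subgroup.one_closed[OF H] by simp
next
  case (incl v) then show ?case by (rule gens)
next
  case (inv v)
  have "inv (v [^] e) \<in> H" using subgroup.m_inv_closed[OF H gens[OF inv]] .
  then show ?case using inv V by (simp add: nat_pow_inv subset_iff)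
next
  case (eng x y)
  then show ?case using mult subgroup.m_closed[OF H] by simp
qed

end

lemma prime_part_split:
  fixes n p :: nat
  assumes "n \<noteq> 0" and p: "Factorial_Ring.prime p"
  shows "n = p ^ multiplicity p n * (n div p ^ multiplicity p n)"
    and "coprime p (n div p ^ multiplicity p n)"
proof -
  show "n = p ^ multiplicity p n * (n div p ^ multiplicity p n)" by (simp add: multiplicity_dvd)
  show "coprime p (n div p ^ multiplicity p n)"
    using multiplicity_decompose[of n p] assms(1) p prime_gt_1_nat[OF p] by (simp add: prime_imp_coprime)
qed

context group begin

lemma sylow_inter_nilpotent_normal:
  assumes fin: "finite (carrier G)" and p: "Factorial_Ring.prime p"
    and ord: "order G = p ^ a * m" and pm: "\<not> p dvd m"
    and P: "subgroup P G" and cP: "card P = p ^ a"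
    and N: "N \<lhd> G" and nil: "nilpotent_group (subgroup_generated G N)"
    and cN: "card N = p ^ b * r" and pr: "coprime p r"
  shows "P \<inter> N = {x \<in> N. x [^] (p ^ b) = \<one>}"
proof
  have "coprime (p ^ b) r" using pr by simp
  then have Q: "{x \<in> N. x [^] (p ^ b) = \<one>} \<lhd> G"
    by (rule nilpotent_normal_coprime_split(1)[OF fin N nil _ cN])
  moreover have "\<And>q. q \<in> {x \<in> N. x [^] (p ^ b) = \<one>} \<Longrightarrow> q [^] (p ^ b) = \<one>" by simp
  ultimately have "{x \<in> N. x [^] (p ^ b) = \<one>} \<subseteq> P"
    by (rule normal_p_subgroup_in_sylow[OF fin p ord pm P cP])
  then show "{x \<in> N. x [^] (p ^ b) = \<one>} \<subseteq> P \<inter> N" by blast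
next
  have sN: "subgroup N G" using N by (rule normal_imp_subgroup)
  show "P \<inter> N \<subseteq> {x \<in> N. x [^] (p ^ b) = \<one>}"
  proof clarify
    fix x assume x: "x \<in> P" "x \<in> N"
    have xc: "x \<in> carrier G" using subgroup.mem_carrier[OF P x(1)] .
    have "x [^] (p ^ a) = \<one>" using subgroup_pow_card[OF fin P x(1)] cP by simp
    moreover have "x [^] (p ^ b * r) = \<one>" using subgroup_pow_card[OF fin sN x(2)] cN by simp
    moreover have "coprime (p ^ a) r" using pr by simp
    ultimately show "x [^] (p ^ b) = \<one>" by (rule pow_coprime_cancel[OF xc])
  qed
qed

text \<open>The power map x \<mapsto> x^e with
  e = 1 mod d and e = 0 mod m is an endomorphism of w(G) fixing the d-part and sending each
  word value v to (v^m)^(e/m).\<close>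
lemma verbal_part_generated_by_powers:
  assumes fin: "finite (carrier G)"
    and nil: "nilpotent_group (subgroup_generated G (verbal G w))"
    and cN: "card (verbal G w) = d * r" and rm: "r dvd m" and dm: "coprime d m"
  shows "{x \<in> verbal G w. x [^] d = \<one>} = generate G (word_power_values G w m)"
    (is "?Q = generate G ?W")
proof -
  have N: "verbal G w \<lhd> G" by (rule verbal_normal)
  have sN: "subgroup (verbal G w) G" using N by (rule normal_imp_subgroup)
  obtain k where "m = r * k" using rm by blast
  then have dr: "coprime d r" using dm by simp
  note split = nilpotent_normal_coprime_split[OF fin N nil dr cN]
  have sQ: "subgroup ?Q G" using split(1) by (rule normal_imp_subgroup)
  obtain e where e: "e mod d = 1 mod d" "m dvd e" using crt_exponent[OF dm] by blast
  then obtain j where j: "e = m * j" by blast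
  have WQ: "?W \<subseteq> ?Q"
  proof
    fix x assume "x \<in> ?W"
    then obtain v where v: "v \<in> word_values G w" "x = v [^] m" by (auto simp: word_power_values_def)
    have vN: "v \<in> verbal G w" using v(1) by (simp add: verbal_def generate.incl)
    have vc: "v \<in> carrier G" using subgroup.mem_carrier[OF sN vN] .
    have "v [^] (d * r) = \<one>" using subgroup_pow_card[OF fin sN vN] cN by simp
    moreover have "d * r dvd d * m" using rm by (rule mult_dvd_mono[OF dvd_refl])
    ultimately have "v [^] (d * m) = \<one>" by (rule pow_dvd_one[OF vc])
    moreover have "x [^] d = v [^] (d * m)"
      using vc v(2) nat_pow_pow[OF vc, of m d] by (simp add: mult.commute)
    moreover have "x \<in> verbal G w"
      using subgroup_int_pow_closed[OF sN vN, of "int m"] v(2) by (simp add: int_pow_int)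
    ultimately show "x \<in> ?Q" by simp
  qed
  have sW: "subgroup (generate G ?W) G"
    using WQ subgroup.subset[OF sQ] by (intro generate_is_subgroup) blast
  show ?thesis
  proof
    show "?Q \<subseteq> generate G ?W"
    proof
      fix x assume x: "x \<in> ?Q"
      have xc: "x \<in> carrier G" using x subgroup.mem_carrier[OF sN] by blast
      have "x [^] d = \<one>" using x by simp
      then have "x [^] e = x [^] (1::nat)" using pow_cong_mod[OF xc _ e(1)] by blast
      moreover have "x [^] e \<in> generate G ?W"
      proof (rule generate_pow_into[OF word_values_carrier sW])
        fix v assume v: "v \<in> word_values G w"
        have vc: "v \<in> carrier G" using v word_values_carrier by blast
        have "v [^] m \<in> generate G ?W"
          using v by (auto simp: word_power_values_def intro: generate.incl)
        then have "(v [^] m) [^] j \<in> generate G ?W"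
          using subgroup_int_pow_closed[OF sW, of _ "int j"] by (simp add: int_pow_int)
        moreover have "v [^] e = (v [^] m) [^] j" using vc j by (simp add: nat_pow_pow)
        ultimately show "v [^] e \<in> generate G ?W" by simp
      next
        show "(y \<otimes> z) [^] e = y [^] e \<otimes> z [^] e"
          if "y \<in> generate G (word_values G w)" "z \<in> generate G (word_values G w)" for y z
          using split(2)[OF e(1) dvd_trans[OF rm e(2)]] that by (simp add: verbal_def)
        show "x \<in> generate G (word_values G w)" using x by (simp add: verbal_def)
      qed
      ultimately show "x \<in> generate G ?W" using xc by simp
    qed
    show "generate G ?W \<subseteq> ?Q" using generate_subgroup_incl[OF WQ sQ] .
  qed
qed

end

theorem theorem1p4:
  fixes G :: "('a, 'b) monoid_scheme" and p a m :: nat and P :: "'a set" and w :: gword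
  assumes "group G" and "finite (carrier G)"
    and "Factorial_Ring.prime p" and "order G = p ^ a * m" and "\<not> p dvd m"
    and "subgroup P G" and "card P = p ^ a"
    and "nilpotent_group (subgroup_generated G (verbal G w))"
  shows "P \<inter> verbal G w = generate G (P \<inter> word_power_values G w m)"
proof -
  interpret group G by fact
  note fin = assms(2) and p = assms(3) and ord = assms(4) and pm = assms(5)
  define n where "n = card (verbal G w)"
  define b where "b = multiplicity p n"
  define r where "r = n div p ^ b"
  have sN: "subgroup (verbal G w) G" using verbal_normal by (rule normal_imp_subgroup)
  have "n \<noteq> 0" using subgroup.finite_imp_card_positive[OF sN fin] by (simp add: n_def)
  then have nr: "n = p ^ b * r" and pr: "coprime p r"
    using prime_part_split[OF _ p] by (simp_all add: b_def r_def)
  have "n dvd p ^ a * m" using lagrange[OF sN] ord by (metis dvd_triv_right n_def)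
  then have "r dvd p ^ a * m" using nr dvd_mult_right[of "p ^ b" r] by simp
  moreover have "coprime r (p ^ a)" using pr by (simp add: coprime_commute)
  ultimately have rm: "r dvd m" by (simp add: coprime_dvd_mult_right_iff)
  have pm': "coprime (p ^ b) m" using p pm by (simp add: prime_imp_coprime)
  have cN: "card (verbal G w) = p ^ b * r" using nr by (simp add: n_def)
  have PN: "P \<inter> verbal G w = generate G (word_power_values G w m)"
    using sylow_inter_nilpotent_normal[OF fin p ord pm assms(6,7) verbal_normal assms(8) cN pr]
      verbal_part_generated_by_powers[OF fin assms(8) cN rm pm'] by (rule trans)
  have "word_power_values G w m \<subseteq> P \<inter> verbal G w"
    unfolding PN by (rule subsetI, rule generate.incl)
  then have "P \<inter> word_power_values G w m = word_power_values G w m" by blast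
  then show ?thesis using PN by simp
qed

end
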